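(* Let $D$ be a consistent domain, $(M,s)$ a state, and $a$ an announcement action with "$a$ announces $\varphi$" in $D$. Assume $(M,s)$ is consistency preserving for $a$, $a$ is executable in $(M,s)$, $(M,s)\models\varphi$, and $\Phi^a_D(a,(M,s))=\{(M',s')\}$. Then: (1) $(M',s')\models\mathbf C_{F_D(a,M,s)}\varphi$; (2) $(M',s')\models\mathbf C_{P_D(a,M,s)}\big(\mathbf C_{F_D(a,M,s)}\varphi\vee\mathbf C_{F_D(a,M,s)}\neg\varphi\big)$; (3) for every $i\in O_D(a,M,s)$ and every belief formula $\psi$, $(M',s')\models\mathbf B_i\psi$ iff $(M,s)\models\mathbf B_i\psi$.
   Context: Fix a finite set of agents $\mathcal{AG}=\{1,\dots,n\}$, a set $\mathcal F$ of fluents and a set of actions. Belief formulae are built from propositional (fluent) formulae over $\mathcal F$ using $\mathbf B_i\varphi$, Boolean connectives, and $\mathbf E_\alpha\varphi,\mathbf C_\alpha\varphi$ ($\emptyset\ne\alpha\subseteq\mathcal{AG}$). A Kripke structure $M$ has worlds $M[S]$, interpretations $M[\pi](u)\subseteq\mathcal F$ and relations $M[i]\subseteq M[S]\times M[S]$; a state is $(M,s)$, $s\in M[S]$. Satisfaction: fluent formulae are evaluated in $M[\pi](s)$; $(M,s)\models\mathbf B_i\psi$ iff $(M,t)\models\psi$ for all $(s,t)\in M[i]$; Boolean connectives as usual; $\mathbf E_\alpha\psi$ iff $\mathbf B_i\psi$ for all $i\in\alpha$; $\mathbf C_\alpha\psi$ iff $\mathbf E^k_\alpha\psi$ for all $k\ge0$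 ($\mathbf E^0_\alpha\psi=\psi$, $\mathbf E^{k+1}_\alpha\psi=\mathbf E_\alpha\mathbf E^k_\alpha\psi$). A domain $D$ contains for each action $a$ exactly one "executable $a$ if $\chi$" ($\chi$ a belief formula; $a$ executable in $(M,u)$ iff $(M,u)\models\chi$), for announcement actions a single statement "$a$ announces $\varphi$" ($\varphi$ a fluent formula), and observability statements "$X$ observes $a$ if $\theta$", "$X$ aware\_of $a$ if $\theta$" ($\theta$ fluent formulae). $F_D(a,M,s)$ is the set of agents $X$ with some "$X$ observes $a$ if $\theta$" in $D$ and $(M,s)\models\theta$; $P_D(a,M,s)$ likewise with "aware\_of"; $O_D(a,M,s)$ the remaining agents. $D$ is consistent if in particular $F_D\cap P_D=\emptyset$ always. Transition $\Phi^a_D$: if $a$ is executable in $(M,s)$, $\Phi^a_D(a,(M,s))=\{(M',s')\}$ where: let $c$ be a bijection from $M[S]$ onto fresh worlds; $M''$ has worlds $c(u)$ for those $u$ with $(M,u)\models\chi$, with interpretation $M[\pi](u)$; for $i\in F_D(a,M,s)$, $(c(u),c(v))\in M''[i]$ iff both are worlds of $M''$, $(u,v)\in M[i]$ and $M[\pi](u)\models\varphi\Leftrightarrow M[\pi](v)\models\varphi$; for $i\in P_D(a,M,s)$, $(c(u),c(v))\in M''[i]$ iff both are worlds of $M''$ and $(u,v)\in M[i]$; $M''[i]=\emptyset$ for $i\in O_D(a,M,s)$. Then $M'[S]=M[S]\cup M''[S]$ with inherited interpretations, $M'[i]=M[i]\cup M''[i]$ for $i\in F_D\cup P_D$, $M'[i]=M[i]\cup\{(c(u),v)\mid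 c(u)\in M''[S],(u,v)\in M[i]\}$ for $i\in O_D$, and $s'=c(s)$. $(M,s)$ is consistency preserving for $a$ (announcing $\varphi$) if $(M,u)\not\models\mathbf B_i\neg\varphi$ for every $u\in M[S]$ and $i\in F_D(a,M,s)\cup P_D(a,M,s)$. *)

theory Defs
  imports Main
begin

datatype 'f fform =
    FAtom 'f
  | FNot "'f fform"
  | FAnd "'f fform" "'f fform"
  | FOr "'f fform" "'f fform"

primrec fsat :: "'f set \<Rightarrow> 'f fform \<Rightarrow> bool" where
  "fsat I (FAtom p) = (p \<in> I)"
| "fsat I (FNot f) = (\<not> fsat I f)"
| "fsat I (FAnd f g) = (fsat I f \<and> fsat I g)"
| "fsat I (FOr f g) = (fsat I f \<or> fsat I g)"

datatype ('ag, 'f) bform =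
    Fl "'f fform"
  | B 'ag "('ag, 'f) bform"
  | BNot "('ag, 'f) bform"
  | BAnd "('ag, 'f) bform" "('ag, 'f) bform"
  | BOr "('ag, 'f) bform" "('ag, 'f) bform"
  | E "'ag set" "('ag, 'f) bform"
  | C "'ag set" "('ag, 'f) bform"

record ('ag, 'f, 'w) kripke =
  worlds :: "'w set"
  interp :: "'w \<Rightarrow> 'f set"
  rel    :: "'ag \<Rightarrow> ('w \<times> 'w) set"

definition is_kripke :: "('ag, 'f, 'w) kripke \<Rightarrow> bool" where
  "is_kripke M \<longleftrightarrow> (\<forall>i. rel M i \<subseteq> worlds M \<times> worlds M)"

(* Epow M \<alpha> k P u  <->  (M,u) |= E^k_\<alpha> \<psi>, where P is the truth set of \<psi> *)
primrec Epow :: "('ag, 'f, 'w) kripke \<Rightarrow> 'ag set \<Rightarrow> nat \<Rightarrow> ('w \<Rightarrow> bool) \<Rightarrow> 'w \<Rightarrow> bool" where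
  "Epow M \<alpha> 0 P u = P u"
| "Epow M \<alpha> (Suc k) P u = (\<forall>i\<in>\<alpha>. \<forall>v. (u, v) \<in> rel M i \<longrightarrow> Epow M \<alpha> k P v)"

primrec sat :: "('ag, 'f, 'w) kripke \<Rightarrow> 'w \<Rightarrow> ('ag, 'f) bform \<Rightarrow> bool" where
  "sat M u (Fl f) = fsat (interp M u) f"
| "sat M u (B i \<psi>) = (\<forall>v. (u, v) \<in> rel M i \<longrightarrow> sat M v \<psi>)"
| "sat M u (BNot \<psi>) = (\<not> sat M u \<psi>)"
| "sat M u (BAnd \<psi> \<chi>) = (sat M u \<psi> \<and> sat M u \<chi>)"
| "sat M u (BOr \<psi> \<chi>) = (sat M u \<psi> \<or> sat M u \<chi>)"
| "sat M u (E \<alpha> \<psi>) = (\<forall>i\<in>\<alpha>. \<forall>v. (u, v) \<in> rel M i \<longrightarrow> sat M v \<psi>)"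
| "sat M u (C \<alpha> \<psi>) = (\<forall>k. Epow M \<alpha> k (\<lambda>v. sat M v \<psi>) u)"

record ('ag, 'f, 'act) domain =
  exec      :: "'act \<Rightarrow> ('ag, 'f) bform"
  announces :: "'act \<Rightarrow> 'f fform option"
  observes  :: "('ag \<times> 'act \<times> 'f fform) set"      (* X observes a if \<theta> *)
  aware     :: "('ag \<times> 'act \<times> 'f fform) set"      (* X aware_of a if \<theta> *)

definition FD :: "('ag, 'f, 'act) domain \<Rightarrow> 'act \<Rightarrow> ('ag, 'f, 'w) kripke \<Rightarrow> 'w \<Rightarrow> 'ag set" where
  "FD D a M s = {X. \<exists>\<theta>. (X, a, \<theta>) \<in> observes D \<and> fsat (interp M s) \<theta>}"

definition PD :: "('ag, 'f, 'act) domain \<Rightarrow> 'act \<Rightarrow> ('ag, 'f, 'w) kripke \<Rightarrow> 'w \<Rightarrow> 'ag set" where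
  "PD D a M s = {X. \<exists>\<theta>. (X, a, \<theta>) \<in> aware D \<and> fsat (interp M s) \<theta>}"

definition OD :: "('ag, 'f, 'act) domain \<Rightarrow> 'act \<Rightarrow> ('ag, 'f, 'w) kripke \<Rightarrow> 'w \<Rightarrow> 'ag set" where
  "OD D a M s = UNIV - (FD D a M s \<union> PD D a M s)"

definition consistent_domain :: "('ag, 'f, 'act) domain \<Rightarrow> bool" where
  "consistent_domain D \<longleftrightarrow>
     (\<forall>a (M :: ('ag, 'f, 'f set) kripke) s. FD D a M s \<inter> PD D a M s = {})"

definition executable :: "('ag, 'f, 'act) domain \<Rightarrow> 'act \<Rightarrow> ('ag, 'f, 'w) kripke \<Rightarrow> 'w \<Rightarrow> bool" where
  "executable D a M u \<longleftrightarrow> sat M u (exec D a)"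

(* c: the bijection from M[S] onto fresh worlds; \<phi>: the announced formula *)
definition upd_model ::
  "('ag, 'f, 'act) domain \<Rightarrow> 'act \<Rightarrow> 'f fform \<Rightarrow> ('ag, 'f, 'w) kripke \<Rightarrow> 'w \<Rightarrow> ('w \<Rightarrow> 'w)
     \<Rightarrow> ('ag, 'f, 'w) kripke" where
  "upd_model D a \<phi> M s c =
    (let \<chi> = exec D a;
         S2 = {u \<in> worlds M. sat M u \<chi>};
         F = FD D a M s; P = PD D a M s; Ob = OD D a M s;
         R2 = (\<lambda>i. if i \<in> F then
                      {(c u, c v) | u v. u \<in> S2 \<and> v \<in> S2 \<and> (u, v) \<in> rel M i \<and>
                          (fsat (interp M u) \<phi> \<longleftrightarrow> fsat (interp M v) \<phi>)}
                   else if i \<in> P then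
                      {(c u, c v) | u v. u \<in> S2 \<and> v \<in> S2 \<and> (u, v) \<in> rel M i}
                   else {})
     in \<lparr> worlds = worlds M \<union> c ` S2,
          interp = (\<lambda>w. if w \<in> c ` S2 then interp M (the_inv_into (worlds M) c w)
                         else interp M w),
          rel = (\<lambda>i. if i \<in> Ob then
                        rel M i \<union> {(c u, v) | u v. u \<in> S2 \<and> (u, v) \<in> rel M i}
                     else rel M i \<union> R2 i) \<rparr>)"

definition Phi ::
  "('ag, 'f, 'act) domain \<Rightarrow> 'act \<Rightarrow> ('ag, 'f, 'w) kripke \<Rightarrow> 'w \<Rightarrow> ('w \<Rightarrow> 'w)
     \<Rightarrow> (('ag, 'f, 'w) kripke \<times> 'w) set" where
  "Phi D a M s c =
    (case announces D a of
       Some \<phi> \<Rightarrow> (if executable D a M s then {(upd_model D a \<phi> M s c, c s)} else {})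
     | None \<Rightarrow> {})"

definition fresh_bij :: "('ag, 'f, 'w) kripke \<Rightarrow> ('w \<Rightarrow> 'w) \<Rightarrow> bool" where
  "fresh_bij M c \<longleftrightarrow> inj_on c (worlds M) \<and> c ` worlds M \<inter> worlds M = {}"

definition consistency_preserving ::
  "('ag, 'f, 'act) domain \<Rightarrow> 'act \<Rightarrow> 'f fform \<Rightarrow> ('ag, 'f, 'w) kripke \<Rightarrow> 'w \<Rightarrow> bool" where
  "consistency_preserving D a \<phi> M s \<longleftrightarrow>
     (\<forall>u\<in>worlds M. \<forall>i\<in>FD D a M s \<union> PD D a M s. \<not> sat M u (B i (BNot (Fl \<phi>))))"

end

theory Submission
  imports Defs
begin

text \<open>The old worlds are closed under all relations of the updated model and keep their
  successors, so they satisfy the same formulae as before; this gives the claim about oblivious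
  agents, whose edges from the copy \<open>c s\<close> lead back into the old model. Common knowledge among a
  group holds at a world as soon as some set containing it is closed under the group's edges
  and satisfies the formula throughout. For the fully observant agents take the copies of the
  executable worlds that agree with the actual one on \<open>\<phi>\<close>; for the partially observant ones
  all copies of executable worlds.\<close>

lemma Epow_if_closed:
  assumes "u \<in> S" "\<forall>w\<in>S. P w"
    and "\<And>i w v. i \<in> \<alpha> \<Longrightarrow> w \<in> S \<Longrightarrow> (w, v) \<in> rel M i \<Longrightarrow> v \<in> S"
  shows "Epow M \<alpha> k P u"
  using assms(1) by (induction k arbitrary: u) (use assms(2,3) in auto)

lemma sat_C_if_closed:
  assumes "u \<in> S" "\<forall>w\<in>S. sat M w \<psi>"
    and "\<And>i w v. i \<in> \<alpha> \<Longrightarrow> w \<in> S \<Longrightarrow> (w, v) \<in> rel M i \<Longrightarrow> v \<in> S"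
  shows "sat M u (C \<alpha> \<psi>)"
  using Epow_if_closed[of u S "\<lambda>w. sat M w \<psi>" \<alpha> M] assms by simp

lemma Epow_cong_closed:
  assumes closed: "\<And>i w v. w \<in> S \<Longrightarrow> (w, v) \<in> rel M i \<Longrightarrow> v \<in> S"
    and rel_eq: "\<And>i w v. w \<in> S \<Longrightarrow> (w, v) \<in> rel M' i \<longleftrightarrow> (w, v) \<in> rel M i"
    and "\<forall>w\<in>S. P' w = P w" and "w \<in> S"
  shows "Epow M' \<alpha> k P' w = Epow M \<alpha> k P w"
  using assms(4)
proof (induction k arbitrary: w)
  case 0
  then show ?case using assms(3) by simp
next
  case (Suc k)
  then show ?case by (simp add: rel_eq) (metis closed)
qed

lemma sat_cong_closed:
  assumes closed: "\<And>i w v. w \<in> S \<Longrightarrow> (w, v) \<in> rel M i \<Longrightarrow> v \<in> S"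
    and rel_eq: "\<And>i w v. w \<in> S \<Longrightarrow> (w, v) \<in> rel M' i \<longleftrightarrow> (w, v) \<in> rel M i"
    and interp_eq: "\<forall>w\<in>S. interp M' w = interp M w" and "w \<in> S"
  shows "sat M' w \<psi> = sat M w \<psi>"
  using assms(4)
proof (induction \<psi> arbitrary: w)
  case (B i \<psi>)
  then show ?case by (simp add: rel_eq) (metis closed)
next
  case (E \<alpha> \<psi>)
  then show ?case by (simp add: rel_eq) (metis closed)
next
  case (C \<alpha> \<psi>)
  have "Epow M' \<alpha> k (\<lambda>v. sat M' v \<psi>) w = Epow M \<alpha> k (\<lambda>v. sat M v \<psi>) w" for k
    by (rule Epow_cong_closed[OF closed rel_eq]) (use C in auto)
  then show ?case by simp
qed (simp_all add: interp_eq)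

lemma fresh_bij_image_notin:
  assumes "fresh_bij M c" "u \<in> worlds M"
  shows "c u \<notin> worlds M" "u \<notin> c ` worlds M"
  using assms unfolding fresh_bij_def by blast+

lemma upd_model_rel_old:
  assumes "fresh_bij M c" "w \<in> worlds M"
  shows "(w, v) \<in> rel (upd_model D a \<phi> M s c) i \<longleftrightarrow> (w, v) \<in> rel M i"
  using fresh_bij_image_notin(2)[OF assms] by (auto simp: upd_model_def Let_def)

lemma upd_model_interp_old:
  assumes "fresh_bij M c" "w \<in> worlds M"
  shows "interp (upd_model D a \<phi> M s c) w = interp M w"
  using fresh_bij_image_notin(2)[OF assms] by (auto simp: upd_model_def Let_def)

lemma upd_model_interp_new:
  assumes "fresh_bij M c" "u \<in> worlds M" "sat M u (exec D a)"
  shows "interp (upd_model D a \<phi> M s c) (c u) = interp M u"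
proof -
  have "the_inv_into (worlds M) c (c u) = u"
    using assms(1,2) unfolding fresh_bij_def by (simp add: the_inv_into_f_f)
  then show ?thesis using assms(2,3) by (auto simp: upd_model_def Let_def)
qed

lemma sat_upd_model_old:
  assumes "is_kripke M" "fresh_bij M c" "w \<in> worlds M"
  shows "sat (upd_model D a \<phi> M s c) w \<psi> = sat M w \<psi>"
  using assms(1) unfolding is_kripke_def
  by (intro sat_cong_closed[where S = "worlds M"])
     (auto simp: upd_model_rel_old[OF assms(2)] upd_model_interp_old[OF assms(2)] assms(3))

text \<open>A copy \<open>c u\<close> has no successors in the old relations, so its successors are exactly
  those prescribed for the agent's observability class.\<close>

lemma upd_model_rel_new_fully_observant:
  assumes "is_kripke M" "fresh_bij M c" "u \<in> worlds M" "i \<in> FD D a M s"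
    and "(c u, w) \<in> rel (upd_model D a \<phi> M s c) i"
  shows "\<exists>v\<in>worlds M. sat M v (exec D a) \<and> w = c v \<and>
           (fsat (interp M v) \<phi> \<longleftrightarrow> fsat (interp M u) \<phi>)"
proof -
  have "(c u, w) \<notin> rel M i"
    using fresh_bij_image_notin(1)[OF assms(2,3)] assms(1) unfolding is_kripke_def by blast
  with assms(4,5) obtain u' v where
    "c u = c u'" "u' \<in> worlds M" "v \<in> worlds M" "sat M v (exec D a)" "w = c v"
    "fsat (interp M u') \<phi> \<longleftrightarrow> fsat (interp M v) \<phi>"
    by (auto simp: upd_model_def Let_def OD_def)
  moreover have "u' = u"
    using assms(2,3) calculation(1,2) unfolding fresh_bij_def by (metis inj_on_def)
  ultimately show ?thesis by blast
qed

lemma upd_model_rel_new_partially_observant: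
  assumes "is_kripke M" "fresh_bij M c" "u \<in> worlds M" "i \<in> PD D a M s"
    and "(c u, w) \<in> rel (upd_model D a \<phi> M s c) i"
  shows "\<exists>v\<in>worlds M. sat M v (exec D a) \<and> w = c v"
proof -
  have "(c u, w) \<notin> rel M i"
    using fresh_bij_image_notin(1)[OF assms(2,3)] assms(1) unfolding is_kripke_def by blast
  with assms(4,5) show ?thesis
    by (auto simp: upd_model_def Let_def OD_def split: if_splits)
qed

lemma upd_model_rel_new_oblivious:
  assumes "is_kripke M" "fresh_bij M c" "u \<in> worlds M" "i \<in> OD D a M s"
    and "sat M u (exec D a)"
  shows "(c u, w) \<in> rel (upd_model D a \<phi> M s c) i \<longleftrightarrow> (u, w) \<in> rel M i"
proof
  assume "(c u, w) \<in> rel (upd_model D a \<phi> M s c) i"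
  moreover have "(c u, w) \<notin> rel M i"
    using fresh_bij_image_notin(1)[OF assms(2,3)] assms(1) unfolding is_kripke_def by blast
  ultimately obtain u' where "c u = c u'" "u' \<in> worlds M" "(u', w) \<in> rel M i"
    using assms(4) by (auto simp: upd_model_def Let_def)
  moreover have "u' = u"
    using assms(2,3) calculation(1,2) unfolding fresh_bij_def by (metis inj_on_def)
  ultimately show "(u, w) \<in> rel M i" by simp
next
  assume "(u, w) \<in> rel M i"
  then show "(c u, w) \<in> rel (upd_model D a \<phi> M s c) i"
    using assms(3-5) by (auto simp: upd_model_def Let_def)
qed

lemma upd_model_C_fully_observant:
  assumes "is_kripke M" "fresh_bij M c" "u \<in> worlds M" "sat M u (exec D a)"
  shows "sat (upd_model D a \<phi> M s c) (c u)
           (C (FD D a M s) (if fsat (interp M u) \<phi> then Fl \<phi> else BNot (Fl \<phi>)))"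
proof (rule sat_C_if_closed)
  let ?S = "c ` {v \<in> worlds M. sat M v (exec D a) \<and> (fsat (interp M v) \<phi> \<longleftrightarrow> fsat (interp M u) \<phi>)}"
  show "c u \<in> ?S" using assms(3,4) by blast
  show "\<forall>w\<in>?S. sat (upd_model D a \<phi> M s c) w (if fsat (interp M u) \<phi> then Fl \<phi> else BNot (Fl \<phi>))"
    by (auto simp: upd_model_interp_new[OF assms(2)])
  show "w \<in> ?S" if "i \<in> FD D a M s" "w' \<in> ?S" "(w', w) \<in> rel (upd_model D a \<phi> M s c) i"
    for i w' w
    using that upd_model_rel_new_fully_observant[OF assms(1,2)] by fastforce
qed

lemma upd_model_C_partially_observant:
  assumes "is_kripke M" "fresh_bij M c" "u \<in> worlds M" "sat M u (exec D a)"
  shows "sat (upd_model D a \<phi> M s c) (c u)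
           (C (PD D a M s) (BOr (C (FD D a M s) (Fl \<phi>)) (C (FD D a M s) (BNot (Fl \<phi>)))))"
proof (rule sat_C_if_closed)
  let ?S = "c ` {v \<in> worlds M. sat M v (exec D a)}"
  show "c u \<in> ?S" using assms(3,4) by blast
  show "\<forall>w\<in>?S. sat (upd_model D a \<phi> M s c) w (BOr (C (FD D a M s) (Fl \<phi>)) (C (FD D a M s) (BNot (Fl \<phi>))))"
  proof
    fix w assume "w \<in> ?S"
    then obtain v where v: "v \<in> worlds M" "sat M v (exec D a)" and w: "w = c v" by blast
    show "sat (upd_model D a \<phi> M s c) w (BOr (C (FD D a M s) (Fl \<phi>)) (C (FD D a M s) (BNot (Fl \<phi>))))"
      using upd_model_C_fully_observant[OF assms(1,2) v, where \<phi> = \<phi> and s = s]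
      by (simp del: sat.simps(7) add: w split: if_splits)
  qed
  show "w \<in> ?S" if "i \<in> PD D a M s" "w' \<in> ?S" "(w', w) \<in> rel (upd_model D a \<phi> M s c) i"
    for i w' w
    using that upd_model_rel_new_partially_observant[OF assms(1,2)] by fastforce
qed

lemma Phi_announcement:
  assumes "announces D a = Some \<phi>" "executable D a M s" "Phi D a M s c = {(M', s')}"
  shows "M' = upd_model D a \<phi> M s c" "s' = c s"
  using assms unfolding Phi_def by auto

theorem proposition4:
  fixes D :: "('ag::finite, 'f, 'act) domain"
    and M M' :: "('ag, 'f, 'w) kripke"
    and s s' :: 'w and a :: 'act and \<phi> :: "'f fform" and c :: "'w \<Rightarrow> 'w"
  assumes "consistent_domain D"
    and "is_kripke M" and "s \<in> worlds M"
    and "announces D a = Some \<phi>"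
    and "consistency_preserving D a \<phi> M s"
    and "executable D a M s"
    and "sat M s (Fl \<phi>)"
    and "fresh_bij M c"
    and "Phi D a M s c = {(M', s')}"
  shows "sat M' s' (C (FD D a M s) (Fl \<phi>)) \<and>
         sat M' s' (C (PD D a M s) (BOr (C (FD D a M s) (Fl \<phi>)) (C (FD D a M s) (BNot (Fl \<phi>))))) \<and>
         (\<forall>i\<in>OD D a M s. \<forall>\<psi>. sat M' s' (B i \<psi>) \<longleftrightarrow> sat M s (B i \<psi>))"
proof (intro conjI ballI allI)
  have exec: "sat M s (exec D a)" using assms(6) unfolding executable_def .
  note M' = Phi_announcement[OF assms(4,6,9)]
  show "sat M' s' (C (FD D a M s) (Fl \<phi>))"
    using upd_model_C_fully_observant[OF assms(2,8,3) exec, where \<phi> = \<phi> and s = s] assms(7) by (simp add: M')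
  show "sat M' s' (C (PD D a M s) (BOr (C (FD D a M s) (Fl \<phi>)) (C (FD D a M s) (BNot (Fl \<phi>)))))"
    using upd_model_C_partially_observant[OF assms(2,8,3) exec] by (simp add: M')
  fix i \<psi> assume "i \<in> OD D a M s"
  have "(s, v) \<in> rel M i \<Longrightarrow> v \<in> worlds M" for v
    using assms(2) unfolding is_kripke_def by blast
  then show "sat M' s' (B i \<psi>) \<longleftrightarrow> sat M s (B i \<psi>)"
    by (simp add: M' upd_model_rel_new_oblivious[OF assms(2,8,3) \<open>i \<in> OD D a M s\<close> exec]
        sat_upd_model_old[OF assms(2,8)])
qed

end
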